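(* Let $t\in\mathbb{R}$ and let $M\in\mathrm{SU}(2,1)$. Suppose that $M$ maps the boundary points $\infty=[1:0:0]$, $0=[0:0:1]$ and $(1,t)=[-\tfrac12+\tfrac{it}{2}:1:1]$ to boundary points with lifts of the form ${}^t(w_{j1},w_{j2},1)$, $j=0,1,2$ (one for each image point). Let $K=\mathbb{Q}(it, w_{jk},\overline{w_{jk}} : j=0,1,2,\ k=1,2)$. Then $M^3\in\mathrm{SU}(2,1,K)$, i.e. all entries of $M^3$ lie in $K$.
   Context: $\mathrm{SU}(2,1)$ is the group of complex $3\times 3$ matrices of determinant $1$ preserving the Hermitian form $\langle z,w\rangle = z_1\overline{w_3}+z_2\overline{w_2}+z_3\overline{w_1}$ on $\mathbb{C}^3$, acting projectively on the boundary of complex hyperbolic plane, namely the projectivization of $\{z\neq0:\langle z,z\rangle=0\}$. For a field $K$, $\mathrm{SU}(2,1,K)$ is the set of elements of $\mathrm{SU}(2,1)$ with all entries in $K$. *)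

theory Defs
  imports "HOL-Analysis.Analysis"
begin

definition herm :: "complex^3 \<Rightarrow> complex^3 \<Rightarrow> complex" where
  "herm z w = z$1 * cnj (w$3) + z$2 * cnj (w$2) + z$3 * cnj (w$1)"

definition SU21 :: "(complex^3^3) set" where
  "SU21 = {M. det M = 1 \<and> (\<forall>z w. herm (M *v z) (M *v w) = herm z w)}"

definition is_subfield :: "complex set \<Rightarrow> bool" where
  "is_subfield F \<longleftrightarrow> 0 \<in> F \<and> 1 \<in> F \<and>
     (\<forall>x\<in>F. \<forall>y\<in>F. x + y \<in> F \<and> x * y \<in> F) \<and>
     (\<forall>x\<in>F. - x \<in> F) \<and> (\<forall>x\<in>F. x \<noteq> 0 \<longrightarrow> inverse x \<in> F)"

definition gen_field :: "complex set \<Rightarrow> complex set" where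
  "gen_field S = \<Inter>{F. is_subfield F \<and> S \<subseteq> F}"

definition SU21_over :: "complex set \<Rightarrow> (complex^3^3) set" where
  "SU21_over K = {M \<in> SU21. \<forall>i j. M$i$j \<in> K}"

definition is_lift :: "complex^3 \<Rightarrow> complex^3 \<Rightarrow> bool" where
  "is_lift v p \<longleftrightarrow> (\<exists>c. c \<noteq> 0 \<and> v = c *s p)"

end

(* Write M e1 = c0 u0, M e3 = c1 u1 and M (a,1,1) = c2 u2 for the given lifts u_j, which have
   entries in K. Preserving the Hermitian form gives three equations c_i cnj(c_j) <u_i,u_j> = const
   with pairings in K; as K is closed under conjugation they force c0/c1, c2/c1 and |c1|^2 into K.
   Hence M = c1 N with N over K, and det M = 1 gives c1^3 = 1 / det N in K, so M^3 = c1^3 N^3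
   is over K although c1 itself need not be. *)

theory Submission
  imports Defs
begin

lemma subfield_add: "is_subfield F \<Longrightarrow> x \<in> F \<Longrightarrow> y \<in> F \<Longrightarrow> x + y \<in> F"
  and subfield_mult: "is_subfield F \<Longrightarrow> x \<in> F \<Longrightarrow> y \<in> F \<Longrightarrow> x * y \<in> F"
  and subfield_uminus: "is_subfield F \<Longrightarrow> x \<in> F \<Longrightarrow> - x \<in> F"
  and subfield_one: "is_subfield F \<Longrightarrow> 1 \<in> F"
  unfolding is_subfield_def by blast+

lemma subfield_inverse: "is_subfield F \<Longrightarrow> x \<in> F \<Longrightarrow> inverse x \<in> F"
  unfolding is_subfield_def by (cases "x = 0") auto

lemma subfield_diff: "is_subfield F \<Longrightarrow> x \<in> F \<Longrightarrow> y \<in> F \<Longrightarrow> x - y \<in> F"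
  by (metis diff_conv_add_uminus subfield_add subfield_uminus)

lemma subfield_divide: "is_subfield F \<Longrightarrow> x \<in> F \<Longrightarrow> y \<in> F \<Longrightarrow> x / y \<in> F"
  by (simp add: divide_inverse subfield_mult subfield_inverse)

lemma subfield_numeral: "is_subfield F \<Longrightarrow> numeral n \<in> F"
  by (induction n) (simp_all only: numeral.simps subfield_add subfield_one)

lemma subfield_gen_field: "is_subfield (gen_field S)"
  unfolding gen_field_def is_subfield_def by auto

lemma gen_field_superset: "S \<subseteq> gen_field S"
  unfolding gen_field_def by auto

lemma gen_field_cnj_closed:
  assumes "cnj ` S \<subseteq> gen_field S" and "x \<in> gen_field S"
  shows "cnj x \<in> gen_field S"
proof -
  have "is_subfield (cnj -` gen_field S)"
    using subfield_gen_field[of S] unfolding is_subfield_def by auto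
  moreover have "S \<subseteq> cnj -` gen_field S"
    using assms(1) by auto
  ultimately have "gen_field S \<subseteq> cnj -` gen_field S"
    unfolding gen_field_def by blast
  with assms(2) show ?thesis by auto
qed

lemma herm_in_subfield:
  assumes "is_subfield F" "\<And>x. x \<in> F \<Longrightarrow> cnj x \<in> F" "\<forall>k. u$k \<in> F" "\<forall>k. v$k \<in> F"
  shows "herm u v \<in> F"
  unfolding herm_def using assms by (simp add: subfield_add subfield_mult)

lemma herm_scale: "herm (c *s u) (d *s v) = c * cnj d * herm u v"
  unfolding herm_def by (simp add: algebra_simps)

lemma SU21_mult: "A \<in> SU21 \<Longrightarrow> B \<in> SU21 \<Longrightarrow> A ** B \<in> SU21"
  unfolding SU21_def by (auto simp: det_mul matrix_vector_mul_assoc[symmetric])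

lemma matrix_mult_in_subfield:
  fixes A B :: "complex^3^3"
  assumes "is_subfield F" "\<forall>i j. A$i$j \<in> F" "\<forall>i j. B$i$j \<in> F"
  shows "\<forall>i j. (A ** B)$i$j \<in> F"
  using assms by (simp add: matrix_matrix_mult_def sum_3 subfield_add subfield_mult)

lemma det_in_subfield:
  fixes A :: "complex^3^3"
  assumes "is_subfield F" "\<forall>i j. A$i$j \<in> F"
  shows "det A \<in> F"
  using assms unfolding det_3 by (simp add: subfield_add subfield_mult subfield_diff)

lemma cube_in_subfield_of_scaled:
  fixes M :: "complex^3^3"
  assumes F: "is_subfield F" and "c \<noteq> 0" and scaled: "\<forall>i j. M$i$j / c \<in> F" and "det M = 1"
  shows "\<forall>i j. (M ** M ** M)$i$j \<in> F"
proof -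
  define N :: "complex^3^3" where "N = (\<chi> i j. M$i$j / c)"
  have M: "M = (\<chi> i j. c * N$i$j)"
    using \<open>c \<noteq> 0\<close> by (simp add: vec_eq_iff N_def)
  have N: "\<forall>i j. N$i$j \<in> F"
    using scaled by (simp add: N_def)
  have "c^3 * det N = 1"
    using \<open>det M = 1\<close> unfolding M det_3 by (simp add: algebra_simps power3_eq_cube)
  then have "c^3 = 1 / det N"
    by (metis mult_zero_right nonzero_eq_divide_eq zero_neq_one)
  then have "c^3 \<in> F"
    using F N by (simp add: det_in_subfield subfield_divide subfield_one)
  moreover have "M ** M ** M = (\<chi> i j. c^3 * (N ** N ** N)$i$j)"
    unfolding M by (simp add: vec_eq_iff matrix_matrix_mult_def sum_distrib_left
        power3_eq_cube mult_ac)
  ultimately show ?thesis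
    using F N by (simp add: matrix_mult_in_subfield subfield_mult)
qed

text \<open>The equations determine \<open>cnj (c2 / c1)\<close>, then \<open>c1 * cnj c1\<close>, then \<open>c0 / c1\<close>
  as rational expressions in \<open>a\<close> and the \<open>h\<close>'s.\<close>
lemma lift_ratios_in_subfield:
  assumes F: "is_subfield F" and cnjF: "\<And>x. x \<in> F \<Longrightarrow> cnj x \<in> F"
    and h: "h01 \<in> F" "h02 \<in> F" "h12 \<in> F" and "a \<in> F" "a \<noteq> 0" "c1 \<noteq> 0"
    and E01: "c0 * cnj c1 * h01 = 1" and E02: "c0 * cnj c2 * h02 = 1"
    and E12: "c1 * cnj c2 * h12 = cnj a"
  shows "c0 / c1 \<in> F" "c2 / c1 \<in> F"
proof -
  have "h01 \<noteq> 0" "h02 \<noteq> 0" "h12 \<noteq> 0" "c0 \<noteq> 0" "c2 \<noteq> 0"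
    using E01 E02 E12 \<open>a \<noteq> 0\<close> by auto
  have "cnj c1 * h01 = cnj c2 * h02"
    using E01 E02 \<open>c0 \<noteq> 0\<close> by (metis mult.assoc mult_left_cancel)
  then have "cnj (c2 / c1) = h01 / h02"
    using \<open>c1 \<noteq> 0\<close> \<open>h02 \<noteq> 0\<close> by (simp add: field_simps)
  then have "cnj (c2 / c1) \<in> F"
    using F h by (simp add: subfield_divide)
  then show r2: "c2 / c1 \<in> F"
    using cnjF by fastforce
  have "c1 * cnj c1 = cnj a / h12 / cnj (c2 / c1)"
    using E12 \<open>c1 \<noteq> 0\<close> \<open>c2 \<noteq> 0\<close> \<open>h12 \<noteq> 0\<close> by (auto simp: field_simps)
  moreover have "cnj a / h12 / cnj (c2 / c1) \<in> F"
    by (rule subfield_divide[OF F subfield_divide[OF F cnjF[OF \<open>a \<in> F\<close>] h(3)] cnjF[OF r2]])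
  ultimately have "c1 * cnj c1 \<in> F"
    by (simp only:)
  moreover have "c0 / c1 = 1 / (h01 * (c1 * cnj c1))"
    using E01 \<open>c1 \<noteq> 0\<close> \<open>h01 \<noteq> 0\<close> by (auto simp: field_simps)
  ultimately show "c0 / c1 \<in> F"
    using F h by (simp add: subfield_divide subfield_mult subfield_one)
qed

lemma matrix_vector_mult_3:
  "((M::'a::semiring_1^3^3) *v v) $ k = M$k$1 * v$1 + M$k$2 * v$2 + M$k$3 * v$3"
  by (simp add: matrix_vector_mult_def sum_3)

lemma SU21_scaled_entries_in_subfield:
  fixes M :: "complex^3^3" and u0 u1 u2 :: "complex^3"
  assumes "M \<in> SU21" and F: "is_subfield F" and cnjF: "\<And>x. x \<in> F \<Longrightarrow> cnj x \<in> F"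
    and u: "\<forall>k. u0$k \<in> F" "\<forall>k. u1$k \<in> F" "\<forall>k. u2$k \<in> F"
    and "a \<in> F" "a \<noteq> 0"
    and "is_lift (M *v vector [1, 0, 0]) u0" "is_lift (M *v vector [0, 0, 1]) u1"
      "is_lift (M *v vector [a, 1, 1]) u2"
  obtains c where "c \<noteq> 0" "\<forall>i j. M$i$j / c \<in> F"
proof -
  obtain c0 c1 c2 where "c1 \<noteq> 0" and c0: "M *v vector [1, 0, 0] = c0 *s u0"
    and c1: "M *v vector [0, 0, 1] = c1 *s u1" and c2: "M *v vector [a, 1, 1] = c2 *s u2"
    using assms(9-11) unfolding is_lift_def by blast
  have herm_M: "herm (M *v x) (M *v y) = herm x y" for x y
    using \<open>M \<in> SU21\<close> unfolding SU21_def by blast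
  have "c0 * cnj c1 * herm u0 u1 = 1" "c0 * cnj c2 * herm u0 u2 = 1"
    "c1 * cnj c2 * herm u1 u2 = cnj a"
    using herm_M[of "vector [1, 0, 0]" "vector [0, 0, 1]"]
      herm_M[of "vector [1, 0, 0]" "vector [a, 1, 1]"]
      herm_M[of "vector [0, 0, 1]" "vector [a, 1, 1]"]
    unfolding c0 c1 c2 herm_scale by (simp_all add: herm_def)
  then have r: "c0 / c1 \<in> F" "c2 / c1 \<in> F"
    using lift_ratios_in_subfield[OF F cnjF herm_in_subfield herm_in_subfield herm_in_subfield]
      F cnjF u \<open>a \<in> F\<close> \<open>a \<noteq> 0\<close> \<open>c1 \<noteq> 0\<close> by blast+
  have col1: "M$i$1 / c1 = c0 / c1 * u0$i" for i
    using arg_cong[OF c0, of "\<lambda>v. v$i"] by (simp add: matrix_vector_mult_3)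
  have col3: "M$i$3 / c1 = u1$i" for i
    using arg_cong[OF c1, of "\<lambda>v. v$i"] \<open>c1 \<noteq> 0\<close> by (simp add: matrix_vector_mult_3)
  have col2: "M$i$2 / c1 = c2 / c1 * u2$i - a * (M$i$1 / c1) - M$i$3 / c1" for i
  proof -
    have "M$i$2 = c2 * u2$i - a * M$i$1 - M$i$3"
      using arg_cong[OF c2, of "\<lambda>v. v$i"] by (simp add: matrix_vector_mult_3 algebra_simps)
    then show ?thesis
      by (simp add: diff_divide_distrib)
  qed
  have "\<forall>i j. M$i$j / c1 \<in> F"
    unfolding forall_3 col2 unfolding col1 col3 using u
    by (intro allI conjI subfield_diff[OF F] subfield_mult[OF F] r \<open>a \<in> F\<close>) auto
  with \<open>c1 \<noteq> 0\<close> show thesis by (rule that)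
qed

theorem mainTheorem4:
  fixes t :: real and M :: "complex^3^3" and w :: "nat \<Rightarrow> nat \<Rightarrow> complex"
  assumes "M \<in> SU21"
    and "is_lift (M *v vector [1, 0, 0]) (vector [w 0 1, w 0 2, 1])"
    and "is_lift (M *v vector [0, 0, 1]) (vector [w 1 1, w 1 2, 1])"
    and "is_lift (M *v vector [- 1/2 + \<i> * of_real t / 2, 1, 1]) (vector [w 2 1, w 2 2, 1])"
  shows "M ** M ** M \<in> SU21_over
           (gen_field ({\<i> * of_real t} \<union> {w j k | j k. j < 3 \<and> k \<in> {1, 2}}
                        \<union> {cnj (w j k) | j k. j < 3 \<and> k \<in> {1, 2}}))"
proof -
  define S where "S = {\<i> * of_real t} \<union> {w j k | j k. j < 3 \<and> k \<in> {1, 2}}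
                        \<union> {cnj (w j k) | j k. j < 3 \<and> k \<in> {1, 2}}"
  define K where "K = gen_field S"
  have K: "is_subfield K" and SK: "S \<subseteq> K"
    unfolding K_def by (rule subfield_gen_field, rule gen_field_superset)
  have tK: "\<i> * of_real t \<in> K"
    using SK unfolding S_def by blast
  have "cnj ` S \<subseteq> K"
  proof -
    have "cnj (\<i> * of_real t) \<in> K"
      using K tK by (simp add: subfield_uminus)
    moreover have "cnj ` (S - {\<i> * of_real t}) \<subseteq> S"
      unfolding S_def by force
    ultimately show ?thesis
      using SK by blast
  qed
  then have cnjK: "cnj x \<in> K" if "x \<in> K" for x
    using that unfolding K_def by (rule gen_field_cnj_closed)
  have "w j k \<in> K" if "j < 3" "k \<in> {1, 2}" for j k
    using SK that unfolding S_def by blast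
  then have lifts: "\<forall>k. (vector [w j 1, w j 2, 1] :: complex^3)$k \<in> K" if "j < 3" for j
    using that K by (simp add: forall_3 subfield_one)
  have aK: "- 1/2 + \<i> * of_real t / 2 \<in> K"
    using tK by (intro subfield_add[OF K] subfield_uminus[OF K] subfield_divide[OF K]
        subfield_one[OF K] subfield_numeral[OF K])
  have a_nonzero: "- 1/2 + \<i> * of_real t / 2 \<noteq> 0"
    by (simp add: complex_eq_iff)
  obtain c where "c \<noteq> 0" "\<forall>i j. M$i$j / c \<in> K"
    by (rule SU21_scaled_entries_in_subfield[OF \<open>M \<in> SU21\<close> K cnjK lifts lifts lifts
          aK a_nonzero assms(2-4)]) simp_all
  then have "\<forall>i j. (M ** M ** M)$i$j \<in> K"
    using \<open>M \<in> SU21\<close> K cube_in_subfield_of_scaled unfolding SU21_def by blast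
  moreover have "M ** M ** M \<in> SU21"
    using \<open>M \<in> SU21\<close> by (simp add: SU21_mult)
  ultimately show ?thesis
    unfolding SU21_over_def K_def S_def by simp
qed

end
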